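(* Fix $q\in[0,1]$, $p\in(0,1)\setminus\{1/2\}$, an integer $k\geq1$ and $f:[0,1]\to[0,1]$, and let $\{S_n\}$ be the elephant random walk with $k$ extractions with replacement described in the context. Suppose one of the following holds: (C1) $p>1/2$, $f(1)<p/(2p-1)$, and $f(i/k)\leq f((i-1)/k)$ for each $i\in\{1,\dots,k\}$, with strict inequality for at least one $i$; (C2) $p<1/2$, $f(0)<(1-p)/(1-2p)$, and $f(i/k)\geq f((i-1)/k)$ for each $i\in\{1,\dots,k\}$, with strict inequality for at least one $i$. Then $S_n/n$ converges almost surely to some $x^*\in(-1,1)$.
   Context: The model: set $X_0=S_0=0$ and let $X_1\in\{\pm1\}$ with $P(X_1=1)=q$. Let $\mathcal{F}_n$ be the $\sigma$-field of all information of the process up to time $n$. For each $n\geq1$, draw $U_{n,1},\dots,U_{n,k}$ i.i.d. uniform on $\{1,\dots,n\}$ (independently of the past), set $C_n^+=\sum_{i=1}^k\chi\{X_{U_{n,i}}=1\}$, and, conditionally on $\mathcal{F}_n$ and the $U_{n,i}$, let $X_{n+1}=1$ with probability $pf(C_n^+/k)+(1-p)\{1-f(C_n^+/k)\}$ and $X_{n+1}=-1$ otherwise. Set $S_n=\sum_{i=1}^n X_i$. The sample size $k$ does not depend on $n$. *)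

theory Defs
  imports "HOL-Probability.Probability"
begin

text \<open>Indices of the independent driving noise of the elephant random walk:
  the first step, the samples U_{n,i}, and the auxiliary uniform coins V_n.\<close>
datatype erw_idx = First | Samp nat nat | Coin nat

definition erw_index_set :: "nat \<Rightarrow> erw_idx set" where
  "erw_index_set k = {First} \<union> {Samp n i | n i. 1 \<le> n \<and> i \<in> {1..k}} \<union> {Coin n | n. 1 \<le> n}"

definition erw_noise ::
  "('a \<Rightarrow> int) \<Rightarrow> (nat \<Rightarrow> nat \<Rightarrow> 'a \<Rightarrow> nat) \<Rightarrow> (nat \<Rightarrow> 'a \<Rightarrow> real) \<Rightarrow> erw_idx \<Rightarrow> 'a \<Rightarrow> real" where
  "erw_noise X1 U V j = (case j of
      First \<Rightarrow> (\<lambda>\<omega>. real_of_int (X1 \<omega>))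
    | Samp n i \<Rightarrow> (\<lambda>\<omega>. real (U n i \<omega>))
    | Coin n \<Rightarrow> V n)"

definition erw_count :: "nat \<Rightarrow> (nat \<Rightarrow> 'a \<Rightarrow> int) \<Rightarrow> (nat \<Rightarrow> nat \<Rightarrow> 'a \<Rightarrow> nat) \<Rightarrow> nat \<Rightarrow> 'a \<Rightarrow> nat" where
  "erw_count k X U n \<omega> = card {i \<in> {1..k}. X (U n i \<omega>) \<omega> = 1}"

definition erw_S :: "(nat \<Rightarrow> 'a \<Rightarrow> int) \<Rightarrow> nat \<Rightarrow> 'a \<Rightarrow> int" where
  "erw_S X n \<omega> = (\<Sum>i\<in>{1..n}. X i \<omega>)"

end

theory Submission
  imports Defs
begin

text \<open>Let \<open>Y\<^sub>n\<close> be the number of \<open>+1\<close> steps among the first \<open>n\<close>. Given the past, each of the \<open>k\<close>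
  samples hits a \<open>+1\<close> step with probability \<open>Y\<^sub>n / n\<close>, independently, so \<open>X\<^sub>n\<^sub>+\<^sub>1 = 1\<close> with
  conditional probability \<open>step_prob (Y\<^sub>n / n)\<close>, the degree-\<open>k\<close> Bernstein polynomial of
  \<open>j \<mapsto> p f (j/k) + (1 - p) (1 - f (j/k))\<close>. Hence \<open>Y\<^sub>N\<^sub>+\<^sub>1 / (N + 1)\<close> is the running average of
  \<open>step_prob (Y\<^sub>m / m)\<close>, \<open>m \<le> N\<close>, plus a sum of \<open>N\<close> bounded martingale differences divided by
  \<open>N + 1\<close>, which tends to \<open>0\<close> almost surely by a fourth-moment Borel-Cantelli argument.
  The monotonicity hypotheses make \<open>step_prob\<close> nonincreasing, and \<open>0 < step_prob < 1\<close> because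
  \<open>0 < p < 1\<close>; so it has a fixed point \<open>y\<^sup>* \<in> (0, 1)\<close>, and an elementary argument shows that
  running averages driven by a nonincreasing map converge to its fixed point. Thus
  \<open>S\<^sub>n / n = 2 Y\<^sub>n / n - 1 \<rightarrow> 2 y\<^sup>* - 1\<close>.\<close>

section \<open>Bernstein polynomials\<close>

text \<open>The de Casteljau recursion for
  \<open>bernstein_poly m F y = (\<Sum>j\<le>m. F j * (m choose j) * y ^ j * (1 - y) ^ (m - j))\<close>.\<close>
fun bernstein_poly :: "nat \<Rightarrow> (nat \<Rightarrow> real) \<Rightarrow> real \<Rightarrow> real" where
  "bernstein_poly 0 F y = F 0"
| "bernstein_poly (Suc m) F y =
     y * bernstein_poly m (\<lambda>j. F (Suc j)) y + (1 - y) * bernstein_poly m F y"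

lemma bernstein_poly_at_0 [simp]: "bernstein_poly m F 0 = F 0"
  by (induction m arbitrary: F) auto

lemma bernstein_poly_at_1 [simp]: "bernstein_poly m F 1 = F m"
  by (induction m arbitrary: F) auto

lemma continuous_on_bernstein_poly: "continuous_on A (bernstein_poly m F)"
  by (induction m arbitrary: F) (simp_all add: continuous_intros)

lemma bernstein_poly_in_unit_interval:
  assumes "\<And>j. F j \<in> {0..1}" "y \<in> {0..1}"
  shows "bernstein_poly m F y \<in> {0..1}"
  using assms
proof (induction m arbitrary: F)
  case (Suc m)
  then have "bernstein_poly m (\<lambda>j. F (Suc j)) y \<in> {0..1}" "bernstein_poly m F y \<in> {0..1}"
    by auto
  with Suc.prems(2) show ?case
    by (auto simp: convex_bound_le intro!: add_nonneg_nonneg mult_nonneg_nonneg)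
qed simp

lemma bernstein_poly_mono_fun:
  assumes "\<And>j. F j \<le> G j" "y \<in> {0..1}"
  shows "bernstein_poly m F y \<le> bernstein_poly m G y"
  using assms
proof (induction m arbitrary: F G)
  case (Suc m)
  then have "bernstein_poly m (\<lambda>j. F (Suc j)) y \<le> bernstein_poly m (\<lambda>j. G (Suc j)) y"
      "bernstein_poly m F y \<le> bernstein_poly m G y"
    by auto
  with Suc.prems(2) show ?case
    by (auto intro!: add_mono mult_left_mono)
qed simp

lemma bernstein_poly_antimono:
  assumes "\<And>j. F (Suc j) \<le> F j"
  shows "antimono_on {0..1} (bernstein_poly m F)"
  using assms
proof (induction m arbitrary: F)
  case 0
  show ?case by (simp add: antimono_on_const)
next
  case (Suc m)
  let ?B = "bernstein_poly m F" and ?B' = "bernstein_poly m (\<lambda>j. F (Suc j))"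
  show ?case
  proof (rule monotone_onI)
    fix x y :: real assume xy: "x \<in> {0..1}" "y \<in> {0..1}" "x \<le> y"
    have "antimono_on {0..1} ?B'" "antimono_on {0..1} ?B"
      using Suc by simp_all
    then have IH: "?B' y \<le> ?B' x" "?B y \<le> ?B x"
      using xy by (simp_all add: monotone_on_def)
    have shift: "?B' x \<le> ?B x"
      by (rule bernstein_poly_mono_fun) (use Suc.prems xy in auto)
    have "bernstein_poly (Suc m) F y = y * ?B' y + (1 - y) * ?B y" by simp
    also have "\<dots> \<le> y * ?B' x + (1 - y) * ?B x"
      using IH xy by (auto intro!: add_mono mult_left_mono)
    also have "\<dots> = ?B x + y * (?B' x - ?B x)" by algebra
    also have "\<dots> \<le> ?B x + x * (?B' x - ?B x)"
      using shift xy by (auto intro!: mult_right_mono_neg)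
    also have "\<dots> = bernstein_poly (Suc m) F x" by (simp add: algebra_simps)
    finally show "bernstein_poly (Suc m) F y \<le> bernstein_poly (Suc m) F x" .
  qed
qed

lemma card_filter_insert_fun_upd:
  assumes "x \<notin> I" "finite I"
  shows "card {i \<in> insert x I. (g(x := y)) i \<in> A} = (if y \<in> A then 1 else 0) + card {i \<in> I. g i \<in> A}"
proof -
  have "{i \<in> insert x I. (g(x := y)) i \<in> A} =
        (if y \<in> A then insert x {i \<in> I. g i \<in> A} else {i \<in> I. g i \<in> A})"
    using assms(1) by auto
  then show ?thesis using assms by simp
qed

lemma sum_PiE_eq_bernstein_poly:
  assumes "finite I" "finite N" "A \<subseteq> N" "N \<noteq> {}"
  shows "(\<Sum>u\<in>PiE I (\<lambda>_. N). F (card {i\<in>I. u i \<in> A}))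
         = real (card N) ^ card I * bernstein_poly (card I) F (real (card A) / real (card N))"
  using assms(1)
proof (induction I arbitrary: F rule: finite_induct)
  case (insert x I)
  let ?n = "real (card N)" and ?a = "real (card A)"
  let ?S = "\<lambda>F. \<Sum>g\<in>PiE I (\<lambda>_. N). F (card {i\<in>I. g i \<in> A})"
  have fin: "finite A" "card A \<le> card N" "card N > 0"
    using assms by (auto intro: finite_subset card_mono simp: card_gt_0_iff)
  have "(\<Sum>u\<in>PiE (insert x I) (\<lambda>_. N). F (card {i\<in>insert x I. u i \<in> A}))
      = (\<Sum>(y,g)\<in>N \<times> PiE I (\<lambda>_. N). F (card {i\<in>insert x I. (g(x := y)) i \<in> A}))"
    unfolding PiE_insert_eq
    by (subst sum.reindex) (auto intro!: inj_combinator insert.hyps simp: case_prod_beta)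
  also have "\<dots> = (\<Sum>(y,g)\<in>N \<times> PiE I (\<lambda>_. N). F ((if y \<in> A then 1 else 0) + card {i\<in>I. g i \<in> A}))"
    by (intro sum.cong refl) (auto simp only: card_filter_insert_fun_upd[OF insert.hyps(2,1)])
  also have "\<dots> = (\<Sum>y\<in>N. \<Sum>g\<in>PiE I (\<lambda>_. N). F ((if y \<in> A then 1 else 0) + card {i\<in>I. g i \<in> A}))"
    by (rule sum.cartesian_product[symmetric])
  also have "\<dots> = (\<Sum>y\<in>N. if y \<in> A then ?S (\<lambda>j. F (Suc j)) else ?S F)"
    by (intro sum.cong refl) auto
  also have "\<dots> = ?a * ?S (\<lambda>j. F (Suc j)) + real (card (N - A)) * ?S F"
    using assms fin by (simp add: sum.If_cases Int_absorb1 Diff_eq[symmetric])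
  also have "\<dots> = ?a * (?n ^ card I * bernstein_poly (card I) (\<lambda>j. F (Suc j)) (?a / ?n))
                + (?n - ?a) * (?n ^ card I * bernstein_poly (card I) F (?a / ?n))"
    using insert.IH[of "\<lambda>j. F (Suc j)"] insert.IH[of F] assms fin
    by (simp add: card_Diff_subset of_nat_diff)
  also have "\<dots> = ?n ^ card (insert x I) * bernstein_poly (card (insert x I)) F (?a / ?n)"
    using insert.hyps fin by (simp add: field_simps)
  finally show ?case .
qed simp

section \<open>Averaged recursions driven by a nonincreasing map\<close>

text \<open>The normalisation by \<open>N + 1\<close> for \<open>N\<close> terms is the one in which the frequency of \<open>+1\<close> steps
  at time \<open>N + 1\<close> appears.\<close>
definition running_average :: "(nat \<Rightarrow> real) \<Rightarrow> nat \<Rightarrow> real" where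
  "running_average h N = (\<Sum>m=1..N. h m) / (real N + 1)"

lemma running_average_Suc:
  "running_average h (Suc N) = running_average h N + (h (Suc N) - running_average h N) / (real N + 2)"
proof -
  have "running_average h (Suc N) = ((real N + 1) * running_average h N + h (Suc N)) / (real N + 2)"
    by (simp add: running_average_def add.commute)
  then show ?thesis by (simp add: field_simps)
qed

lemma running_average_nonneg: "(\<And>m. 0 \<le> h m) \<Longrightarrow> 0 \<le> running_average h N"
  by (simp add: running_average_def sum_nonneg)

text \<open>If the terms following an average above \<open>c + \<delta>\<close> are at most \<open>c\<close>, the sums grow by at
  most \<open>c\<close> per step and the average cannot stay above \<open>c + \<delta>\<close>.\<close>
lemma running_average_returns_below:
  fixes h :: "nat \<Rightarrow> real"
  assumes h01: "\<And>m. h m \<in> {0..1}" and c: "0 \<le> c" and \<delta>: "0 < \<delta>"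
    and drift: "\<And>N. N \<ge> N0 \<Longrightarrow> c + \<delta> \<le> running_average h N \<Longrightarrow> h (Suc N) \<le> c"
  shows "\<exists>N\<ge>N0. running_average h N < c + \<delta>"
proof (rule ccontr)
  define W where "W N = (\<Sum>m=1..N. h m)" for N
  assume "\<not> ?thesis"
  then have above: "\<And>N. N \<ge> N0 \<Longrightarrow> c + \<delta> \<le> running_average h N" by force
  have W_growth: "W (N0 + j) \<le> W N0 + real j * c" for j
  proof (induction j)
    case (Suc j)
    have "h (Suc (N0 + j)) \<le> c" using drift[of "N0 + j"] above[of "N0 + j"] by simp
    with Suc show ?case by (simp add: W_def algebra_simps)
  qed simp
  have "W N0 \<le> real N0"
    using sum_mono[of "{1..N0}" h "\<lambda>_. 1"] h01 by (simp add: W_def)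
  obtain j :: nat where j: "real j > real N0 / \<delta>" using reals_Archimedean2 by blast
  have "(c + \<delta>) * (real (N0 + j) + 1) \<le> W (N0 + j)"
    using above[of "N0 + j"] by (simp add: running_average_def W_def field_simps)
  also have "\<dots> \<le> real N0 + real j * c" using W_growth[of j] \<open>W N0 \<le> real N0\<close> by simp
  finally have "c * (real N0 + 1) + \<delta> * (real N0 + 1) + \<delta> * real j \<le> real N0"
    by (simp add: algebra_simps)
  moreover have "0 \<le> c * (real N0 + 1)" "0 \<le> \<delta> * (real N0 + 1)" using c \<delta> by simp_all
  moreover have "real N0 < \<delta> * real j" using j \<delta> by (simp add: field_simps)
  ultimately show False by linarith
qed

text \<open>Once below \<open>c + \<delta>\<close>, a single step raises the average by less than \<open>\<delta>\<close>, and above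
  \<open>c + \<delta>\<close> it does not increase.\<close>
lemma running_average_eventually_below:
  fixes h :: "nat \<Rightarrow> real"
  assumes h01: "\<And>m. h m \<in> {0..1}" and c: "0 \<le> c" and \<delta>: "0 < \<delta>"
    and drift: "eventually (\<lambda>N. c + \<delta> \<le> running_average h N \<longrightarrow> h (Suc N) \<le> c) sequentially"
  shows "eventually (\<lambda>N. running_average h N < c + 2 * \<delta>) sequentially"
proof -
  let ?w = "running_average h"
  have "eventually (\<lambda>N. (c + \<delta> \<le> ?w N \<longrightarrow> h (Suc N) \<le> c) \<and> 1 / (real N + 2) < \<delta>) sequentially"
    using drift \<delta> by (intro eventually_conj) (simp, real_asymp)
  then obtain N0 where N0: "\<And>N. N \<ge> N0 \<Longrightarrow> (c + \<delta> \<le> ?w N \<longrightarrow> h (Suc N) \<le> c) \<and> 1 / (real N + 2) < \<delta>"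
    by (auto simp: eventually_sequentially)
  have "\<exists>N1\<ge>N0. ?w N1 < c + \<delta>"
    by (rule running_average_returns_below[OF h01 c \<delta>]) (simp add: N0)
  then obtain N1 where N1: "N1 \<ge> N0" "?w N1 < c + \<delta>" by blast
  have "?w N < c + 2 * \<delta>" if "N \<ge> N1" for N
    using that
  proof (induction N rule: dec_induct)
    case (step N)
    show ?case
    proof (cases "?w N < c + \<delta>")
      case True
      have "h (Suc N) \<le> 1" "0 \<le> ?w N"
        using h01 by (auto intro: running_average_nonneg)
      then have "h (Suc N) - ?w N \<le> 1" by simp
      then have "(h (Suc N) - ?w N) / (real N + 2) \<le> 1 / (real N + 2)"
        by (intro divide_right_mono) auto
      then show ?thesis using True N0[of N] step N1 running_average_Suc[of h N] by simp
    next
      case False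
      then have "h (Suc N) \<le> ?w N" using N0[of N] step N1 by simp
      then have "(h (Suc N) - ?w N) / (real N + 2) \<le> 0" by (simp add: divide_nonpos_pos)
      then show ?thesis using step running_average_Suc[of h N] by simp
    qed
  qed (use N1 \<delta> in simp)
  then show ?thesis by (auto simp: eventually_sequentially)
qed

lemma averaged_recursion_upper:
  fixes y r :: "nat \<Rightarrow> real" and H :: "real \<Rightarrow> real"
  assumes y01: "\<And>n. y n \<in> {0..1}"
    and H_antimono: "antimono_on {0..1} H"
    and H01: "\<And>a. a \<in> {0..1} \<Longrightarrow> H a \<in> {0..1}"
    and fixpoint: "c \<in> {0..1}" "H c = c"
    and r: "r \<longlonglongrightarrow> 0"
    and rec: "\<And>N. y (Suc N) = running_average (\<lambda>m. H (y m)) N + r N"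
    and \<epsilon>: "\<epsilon> > 0"
  shows "eventually (\<lambda>n. y n < c + \<epsilon>) sequentially"
proof -
  let ?w = "running_average (\<lambda>m. H (y m))"
  have small_r: "eventually (\<lambda>N. \<bar>r N\<bar> < \<epsilon> / 4) sequentially"
    using tendstoD[OF r, of "\<epsilon> / 4"] \<epsilon> by (simp add: dist_real_def)
  then have "eventually (\<lambda>N. c + \<epsilon> / 4 \<le> ?w N \<longrightarrow> H (y (Suc N)) \<le> c) sequentially"
  proof eventually_elim
    case (elim N)
    show ?case
    proof
      assume "c + \<epsilon> / 4 \<le> ?w N"
      then have "c \<le> y (Suc N)" using elim rec[of N] by simp
      then show "H (y (Suc N)) \<le> c"
        using fixpoint y01 monotone_onD[OF H_antimono] by fastforce
    qed
  qed
  then have "eventually (\<lambda>N. ?w N < c + 2 * (\<epsilon> / 4)) sequentially"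
    by (rule running_average_eventually_below[rotated 3]) (use H01 y01 fixpoint \<epsilon> in auto)
  with small_r have "eventually (\<lambda>N. y (Suc N) < c + \<epsilon>) sequentially"
    by eventually_elim (simp add: rec)
  then show ?thesis by (rule eventually_sequentially_Suc[THEN iffD1])
qed

text \<open>The reflection \<open>y \<mapsto> 1 - y\<close>, \<open>H \<mapsto> (\<lambda>a. 1 - H (1 - a))\<close> turns the upper bound
  into the lower bound.\<close>
lemma averaged_recursion_tendsto:
  fixes y r :: "nat \<Rightarrow> real" and H :: "real \<Rightarrow> real"
  assumes y01: "\<And>n. y n \<in> {0..1}"
    and H_antimono: "antimono_on {0..1} H"
    and H01: "\<And>a. a \<in> {0..1} \<Longrightarrow> H a \<in> {0..1}"
    and fixpoint: "c \<in> {0..1}" "H c = c"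
    and r: "r \<longlonglongrightarrow> 0"
    and rec: "\<And>N. y (Suc N) = running_average (\<lambda>m. H (y m)) N + r N"
  shows "y \<longlonglongrightarrow> c"
proof (rule tendstoI)
  fix \<epsilon> :: real assume \<epsilon>: "\<epsilon> > 0"
  define H' where "H' a = 1 - H (1 - a)" for a
  define r' where "r' N = 1 / (real N + 1) - r N" for N
  have "(\<lambda>N. 1 / (real N + 1)) \<longlonglongrightarrow> 0"
    by real_asymp
  then have r': "r' \<longlonglongrightarrow> 0"
    unfolding r'_def using tendsto_diff[OF _ r] by fastforce
  have rec': "1 - y (Suc N) = running_average (\<lambda>m. H' (1 - y m)) N + r' N" for N
  proof -
    have sum_H': "(\<Sum>m=1..N. H' (1 - y m)) = real N - (\<Sum>m=1..N. H (y m))"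
      by (simp add: H'_def sum_subtractf)
    have frac: "(real N - S) / (real N + 1) + 1 / (real N + 1) = 1 - S / (real N + 1)" for S :: real
      by (simp add: field_simps)
    show ?thesis
      unfolding rec r'_def running_average_def sum_H' using frac[of "\<Sum>m=1..N. H (y m)"] by linarith
  qed
  have H'_antimono: "antimono_on {0..1} H'"
    using H_antimono by (auto simp: H'_def monotone_on_def)
  have "eventually (\<lambda>n. y n < c + \<epsilon>) sequentially"
    by (rule averaged_recursion_upper[OF y01 H_antimono H01 fixpoint r rec \<epsilon>])
  moreover have "eventually (\<lambda>n. 1 - y n < (1 - c) + \<epsilon>) sequentially"
    by (rule averaged_recursion_upper[OF _ H'_antimono _ _ _ r' rec' \<epsilon>])
       (use y01 H01 fixpoint in \<open>auto simp: H'_def\<close>)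
  ultimately show "eventually (\<lambda>n. dist (y n) c < \<epsilon>) sequentially"
    by eventually_elim (auto simp: dist_real_def abs_less_iff)
qed

section \<open>A strong law for bounded orthogonal increments\<close>

text \<open>Orthogonality of each increment to the powers of the preceding partial sum is the part of
  the martingale-difference property that the fourth-moment argument uses.\<close>
locale bounded_orthogonal_increments = prob_space +
  fixes D :: "nat \<Rightarrow> 'a \<Rightarrow> real"
  assumes D_measurable: "\<And>m. D m \<in> borel_measurable M"
    and D_bounded: "\<And>m \<omega>. \<omega> \<in> space M \<Longrightarrow> \<bar>D m \<omega>\<bar> \<le> 1"
    and D_orthogonal: "\<And>N j. (\<integral>\<omega>. D (Suc N) \<omega> * (\<Sum>m=1..N. D m \<omega>) ^ j \<partial>M) = 0"
begin

definition S :: "nat \<Rightarrow> 'a \<Rightarrow> real" where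
  "S N \<omega> = (\<Sum>m=1..N. D m \<omega>)"

lemma S_measurable [measurable]: "S N \<in> borel_measurable M"
  unfolding S_def using D_measurable by measurable

lemma S_Suc: "S (Suc N) \<omega> = S N \<omega> + D (Suc N) \<omega>"
  by (simp add: S_def)

lemma abs_S_le:
  assumes "\<omega> \<in> space M"
  shows "\<bar>S N \<omega>\<bar> \<le> real N"
proof -
  have "\<bar>S N \<omega>\<bar> \<le> (\<Sum>m=1..N. \<bar>D m \<omega>\<bar>)" unfolding S_def by (rule sum_abs)
  also have "\<dots> \<le> (\<Sum>m=1..N. 1)" by (intro sum_mono D_bounded assms)
  finally show ?thesis by simp
qed

lemma integrable_bounded:
  fixes h :: "'a \<Rightarrow> real"
  assumes "h \<in> borel_measurable M" "\<And>\<omega>. \<omega> \<in> space M \<Longrightarrow> \<bar>h \<omega>\<bar> \<le> B"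
  shows "integrable M h"
  using assms by (intro integrable_const_bound[where B = B]) auto

lemma integrable_D_times_S_power [simp]: "integrable M (\<lambda>\<omega>. D (Suc N) \<omega> * S N \<omega> ^ j)"
proof (rule integrable_bounded)
  show "\<bar>D (Suc N) \<omega> * S N \<omega> ^ j\<bar> \<le> 1 * real N ^ j" if "\<omega> \<in> space M" for \<omega>
    unfolding abs_mult power_abs
    by (intro mult_mono power_mono) (use that D_bounded abs_S_le in auto)
qed (use D_measurable in measurable)

lemma integrable_S_power [simp]: "integrable M (\<lambda>\<omega>. S N \<omega> ^ j)"
  by (rule integrable_bounded[where B = "real N ^ j"])
     (use abs_S_le in \<open>auto simp: power_abs intro: power_mono\<close>)

lemma integrable_abs_S [simp]: "integrable M (\<lambda>\<omega>. \<bar>S N \<omega>\<bar>)"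
  by (rule integrable_bounded[where B = "real N"]) (use abs_S_le in auto)

lemma integral_D_times_S_power [simp]: "(\<integral>\<omega>. D (Suc N) \<omega> * S N \<omega> ^ j \<partial>M) = 0"
  using D_orthogonal by (simp add: S_def)

lemma second_moment_S: "(\<integral>\<omega>. S N \<omega> ^ 2 \<partial>M) \<le> real N"
proof (induction N)
  case (Suc N)
  have "S (Suc N) \<omega> ^ 2 \<le> S N \<omega> ^ 2 + 2 * (D (Suc N) \<omega> * S N \<omega>) + 1"
    if "\<omega> \<in> space M" for \<omega>
    using D_bounded[OF that, of "Suc N"] abs_square_le_1[of "D (Suc N) \<omega>"]
    by (simp add: S_Suc power2_sum algebra_simps)
  then have "(\<integral>\<omega>. S (Suc N) \<omega> ^ 2 \<partial>M)
      \<le> (\<integral>\<omega>. S N \<omega> ^ 2 + 2 * (D (Suc N) \<omega> * S N \<omega>) + 1 \<partial>M)"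
    using integrable_D_times_S_power[of N 1] by (intro integral_mono) auto
  also have "\<dots> = (\<integral>\<omega>. S N \<omega> ^ 2 \<partial>M) + 1"
    using integrable_D_times_S_power[of N 1] integral_D_times_S_power[of N 1]
    by (simp add: prob_space)
  finally show ?case using Suc by simp
qed (simp add: S_def)

lemma fourth_power_step_le:
  fixes T d :: real
  assumes "\<bar>d\<bar> \<le> 1"
  shows "(T + d) ^ 4 \<le> T ^ 4 + 4 * (d * T ^ 3) + 6 * T ^ 2 + 4 * \<bar>T\<bar> + 1"
proof -
  have "d ^ 2 \<le> 1" using assms by (simp add: abs_square_le_1)
  then have "T ^ 2 * d ^ 2 \<le> T ^ 2" using mult_left_mono[of "d ^ 2" 1 "T ^ 2"] by simp
  moreover have "T * d ^ 3 \<le> \<bar>T\<bar>"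
    using mult_left_mono[of "\<bar>d\<bar> ^ 3" 1 "\<bar>T\<bar>"] abs_le_D1[of "T * d ^ 3"] assms
    by (simp add: abs_mult power_abs power_le_one)
  moreover have "d ^ 4 \<le> 1"
    using power_le_one[of "\<bar>d\<bar>" 4] assms by simp
  moreover have "(T + d) ^ 4 = T ^ 4 + 4 * (d * T ^ 3) + 6 * (T ^ 2 * d ^ 2) + 4 * (T * d ^ 3) + d ^ 4"
    by (simp add: power_def algebra_simps eval_nat_numeral)
  ultimately show ?thesis by linarith
qed

lemma fourth_moment_S: "(\<integral>\<omega>. S N \<omega> ^ 4 \<partial>M) \<le> 5 * real N ^ 2"
proof (induction N)
  case (Suc N)
  have "(\<integral>\<omega>. S (Suc N) \<omega> ^ 4 \<partial>M)
      \<le> (\<integral>\<omega>. S N \<omega> ^ 4 + 4 * (D (Suc N) \<omega> * S N \<omega> ^ 3) + 6 * S N \<omega> ^ 2 + 4 * \<bar>S N \<omega>\<bar> + 1 \<partial>M)"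
    using integrable_S_power[of "Suc N" 4]
    by (intro integral_mono) (auto simp: S_Suc intro: fourth_power_step_le D_bounded)
  also have "\<dots> = (\<integral>\<omega>. S N \<omega> ^ 4 \<partial>M) + 6 * (\<integral>\<omega>. S N \<omega> ^ 2 \<partial>M) + 4 * (\<integral>\<omega>. \<bar>S N \<omega>\<bar> \<partial>M) + 1"
    by (simp add: prob_space)
  also have "(\<integral>\<omega>. \<bar>S N \<omega>\<bar> \<partial>M) \<le> real N"
    using integral_mono[of M _ "\<lambda>_. real N"] abs_S_le by (simp add: prob_space)
  then have "(\<integral>\<omega>. S N \<omega> ^ 4 \<partial>M) + 6 * (\<integral>\<omega>. S N \<omega> ^ 2 \<partial>M) + 4 * (\<integral>\<omega>. \<bar>S N \<omega>\<bar> \<partial>M) + 1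
      \<le> 5 * real N ^ 2 + 6 * real N + 4 * real N + 1"
    using Suc second_moment_S[of N] by linarith
  also have "\<dots> \<le> 5 * real (Suc N) ^ 2"
    by (simp add: power2_eq_square algebra_simps)
  finally show ?case .
qed (simp add: S_def)

lemma prob_abs_S_gt_le:
  assumes \<epsilon>: "\<epsilon> > 0"
  shows "prob {\<omega>\<in>space M. \<epsilon> * real N < \<bar>S N \<omega>\<bar>} \<le> 5 / \<epsilon> ^ 4 * inverse (real N ^ 2)"
proof (cases "N = 0")
  case True
  then show ?thesis by (simp add: S_def)
next
  case False
  let ?c = "(\<epsilon> * real N) ^ 4"
  have c: "?c > 0" using \<epsilon> False by simp
  have "{\<omega>\<in>space M. \<epsilon> * real N < \<bar>S N \<omega>\<bar>} \<subseteq> {\<omega>\<in>space M. ?c \<le> S N \<omega> ^ 4}"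
  proof safe
    fix \<omega> assume "\<omega> \<in> space M" "\<epsilon> * real N < \<bar>S N \<omega>\<bar>"
    then have "?c \<le> \<bar>S N \<omega>\<bar> ^ 4" using \<epsilon> by (intro power_mono) auto
    then show "?c \<le> S N \<omega> ^ 4" by simp
  qed
  then have "prob {\<omega>\<in>space M. \<epsilon> * real N < \<bar>S N \<omega>\<bar>} \<le> prob {\<omega>\<in>space M. ?c \<le> S N \<omega> ^ 4}"
    by (intro finite_measure_mono) measurable
  also have "\<dots> \<le> (\<integral>\<omega>. S N \<omega> ^ 4 \<partial>M) / ?c"
    by (rule integral_Markov_inequality_measure[OF integrable_S_power _ _ c, where A = "space M"])
       auto
  also have "\<dots> \<le> 5 * real N ^ 2 / ?c"
    by (rule divide_right_mono[OF fourth_moment_S]) (use c in simp)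
  also have "\<dots> = 5 / \<epsilon> ^ 4 * inverse (real N ^ 2)"
    using \<epsilon> False by (simp add: field_simps power_mult_distrib eval_nat_numeral)
  finally show ?thesis .
qed

lemma AE_eventually_abs_S_le:
  assumes \<epsilon>: "\<epsilon> > 0"
  shows "AE \<omega> in M. eventually (\<lambda>N. \<bar>S N \<omega>\<bar> \<le> \<epsilon> * real N) sequentially"
proof -
  define A where "A N = {\<omega>\<in>space M. \<epsilon> * real N < \<bar>S N \<omega>\<bar>}" for N
  have A_sets: "A N \<in> sets M" for N
    unfolding A_def by measurable
  have "summable (\<lambda>N. prob (A N))"
    by (rule summable_comparison_test[OF _ summable_mult[OF inverse_power_summable, of 2 "5 / \<epsilon> ^ 4"]])
       (use prob_abs_S_gt_le[OF \<epsilon>] in \<open>auto simp: A_def\<close>)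
  then have "AE \<omega> in M. eventually (\<lambda>N. \<omega> \<in> space M - A N) sequentially"
    by (intro borel_cantelli_AE1 A_sets) (simp_all add: emeasure_eq_measure)
  then show ?thesis
    by (rule AE_mp) (auto elim!: eventually_mono simp: A_def)
qed

lemma AE_S_over_N_tendsto_0: "AE \<omega> in M. (\<lambda>N. S N \<omega> / real N) \<longlonglongrightarrow> 0"
proof -
  have "AE \<omega> in M. \<forall>r::nat. eventually (\<lambda>N. \<bar>S N \<omega>\<bar> \<le> 1 / real (Suc r) * real N) sequentially"
    by (subst AE_all_countable) (intro allI AE_eventually_abs_S_le, simp)
  then show ?thesis
  proof (rule AE_mp, intro AE_I2 impI)
    fix \<omega>
    assume bounds: "\<forall>r::nat. eventually (\<lambda>N. \<bar>S N \<omega>\<bar> \<le> 1 / real (Suc r) * real N) sequentially"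
    show "(\<lambda>N. S N \<omega> / real N) \<longlonglongrightarrow> 0"
    proof (rule tendstoI)
      fix e :: real assume "e > 0"
      then obtain r :: nat where r: "1 / real (Suc r) < e"
        by (metis reals_Archimedean inverse_eq_divide of_nat_Suc)
      from bounds[rule_format, of r] eventually_gt_at_top[of 0]
      show "eventually (\<lambda>N. dist (S N \<omega> / real N) 0 < e) sequentially"
      proof eventually_elim
        case (elim N)
        then have "\<bar>S N \<omega>\<bar> / real N \<le> 1 / real (Suc r)" by (simp add: pos_divide_le_eq)
        with r show ?case by (simp add: dist_real_def)
      qed
    qed
  qed
qed

end

section \<open>The elephant random walk with \<open>k\<close> extractions\<close>

lemma measurable_card_filter:
  fixes I :: "nat set"
  assumes "\<And>i. i \<in> I \<Longrightarrow> Measurable.pred N (P i)"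
  shows "(\<lambda>\<omega>. card {i\<in>I. P i \<omega>}) \<in> measurable N (count_space UNIV)"
proof (rule measurable_card)
  fix i
  show "{\<omega> \<in> space N. i \<in> {i\<in>I. P i \<omega>}} \<in> sets N"
  proof (cases "i \<in> I")
    case True
    then have "{\<omega> \<in> space N. i \<in> {i\<in>I. P i \<omega>}} = {\<omega> \<in> space N. P i \<omega>}" by blast
    with assms[OF True] show ?thesis by (simp only: pred_def)
  next
    case False
    then have "{\<omega> \<in> space N. i \<in> {i\<in>I. P i \<omega>}} = {}" by blast
    then show ?thesis by (simp only: sets.empty_sets)
  qed
qed

definition up_count :: "(nat \<Rightarrow> int) \<Rightarrow> nat \<Rightarrow> real" where
  "up_count x m = real (card {j\<in>{1..m}. x j = 1})"

lemma up_count_Suc: "up_count x (Suc m) = up_count x m + of_bool (x (Suc m) = 1)"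
proof -
  have "{j\<in>{1..Suc m}. x j = 1} =
        (if x (Suc m) = 1 then insert (Suc m) {j\<in>{1..m}. x j = 1} else {j\<in>{1..m}. x j = 1})"
    by (auto simp: le_Suc_eq)
  then show ?thesis by (simp add: up_count_def)
qed

lemma up_count_over_in_unit_interval: "up_count x m / real m \<in> {0..1}"
proof -
  have "card {j\<in>{1..m}. x j = 1} \<le> card {1..m}" by (rule card_mono) auto
  then show ?thesis by (auto simp: up_count_def divide_le_eq_1)
qed

locale elephant_walk =
  fixes M :: "'a measure"
    and p :: real and k :: nat and f :: "real \<Rightarrow> real"
    and X :: "nat \<Rightarrow> 'a \<Rightarrow> int"
    and U :: "nat \<Rightarrow> nat \<Rightarrow> 'a \<Rightarrow> nat"
    and V :: "nat \<Rightarrow> 'a \<Rightarrow> real"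
  assumes p: "0 < p" "p < 1"
    and k: "1 \<le> k"
    and f_range: "\<forall>x\<in>{0..1}. f x \<in> {0..1}"
    and M: "prob_space M"
    and indep: "prob_space.indep_vars M (\<lambda>_. borel) (erw_noise (X 1) U V) (erw_index_set k)"
    and X1_vals: "\<forall>\<omega>\<in>space M. X 1 \<omega> \<in> {-1, 1}"
    and U_vals: "\<forall>n\<ge>1. \<forall>i\<in>{1..k}. \<forall>\<omega>\<in>space M. U n i \<omega> \<in> {1..n}"
    and U_unif: "\<forall>n\<ge>1. \<forall>i\<in>{1..k}. \<forall>j\<in>{1..n}.
                   measure M {\<omega>\<in>space M. U n i \<omega> = j} = 1 / real n"
    and V_unif: "\<forall>n\<ge>1. distr M lborel (V n) = uniform_measure lborel {0..1}"
    and X_step: "\<forall>n\<ge>1. \<forall>\<omega>\<in>space M. X (Suc n) \<omega> =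
        (let c = real (erw_count k X U n \<omega>) / real k in
         if V n \<omega> \<le> p * f c + (1 - p) * (1 - f c) then 1 else -1)"
begin

sublocale prob_space M by (rule M)

definition noise :: "erw_idx \<Rightarrow> 'a \<Rightarrow> real" where
  "noise = erw_noise (X 1) U V"

definition noise_events :: "erw_idx \<Rightarrow> 'a set set" where
  "noise_events j = {noise j -` A \<inter> space M | A. A \<in> sets borel}"

definition past_indices :: "nat \<Rightarrow> erw_idx set" where
  "past_indices n = {First} \<union> {Samp m i | m i. 1 \<le> m \<and> m < n \<and> i \<in> {1..k}} \<union> {Coin m | m. 1 \<le> m \<and> m < n}"

text \<open>The information available when \<open>X (Suc n)\<close> is about to be drawn is generated by
  the noise with index in \<open>past_indices n\<close>; it determines \<open>X 1, \<dots>, X n\<close>.\<close>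
definition past :: "nat \<Rightarrow> 'a measure" where
  "past n = sigma (space M) (\<Union>j\<in>past_indices n. noise_events j)"

text \<open>Capping at \<open>k\<close> changes nothing for the counts \<open>j \<le> k\<close> that occur, but makes the sequence
  monotone on all of \<open>nat\<close>, as \<open>bernstein_poly_antimono\<close> requires.\<close>
definition step_prob_count :: "nat \<Rightarrow> real" where
  "step_prob_count j = p * f (real (min j k) / real k) + (1 - p) * (1 - f (real (min j k) / real k))"

definition step_prob :: "real \<Rightarrow> real" where
  "step_prob = bernstein_poly k step_prob_count"

definition path :: "'a \<Rightarrow> nat \<Rightarrow> int" where
  "path \<omega> = (\<lambda>j. X j \<omega>)"

definition path_event :: "nat \<Rightarrow> (nat \<Rightarrow> int) \<Rightarrow> 'a set" where
  "path_event n v = {\<omega>\<in>space M. \<forall>j\<in>{1..n}. X j \<omega> = v j}"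

definition draw_event :: "nat \<Rightarrow> (nat \<Rightarrow> nat) \<Rightarrow> real \<Rightarrow> 'a set" where
  "draw_event n u t = {\<omega>\<in>space M. (\<forall>i\<in>{1..k}. U n i \<omega> = u i) \<and> V n \<omega> \<le> t}"

definition innovation :: "(nat \<Rightarrow> int) \<Rightarrow> nat \<Rightarrow> real" where
  "innovation x m = of_bool (x (Suc m) = 1) - step_prob (up_count x m / real m)"

lemma noise_measurable: "j \<in> erw_index_set k \<Longrightarrow> noise j \<in> borel_measurable M"
  using indep unfolding indep_vars_def2 noise_def by auto

lemma indep_noise_events: "indep_sets noise_events (erw_index_set k)"
  using indep unfolding indep_vars_def2 noise_def noise_events_def by auto

lemma past_indices_subset: "past_indices n \<subseteq> erw_index_set k"
  unfolding past_indices_def erw_index_set_def by auto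

lemma noise_events_subset_sets: "j \<in> erw_index_set k \<Longrightarrow> noise_events j \<subseteq> sets M"
  using noise_measurable unfolding noise_events_def by (auto simp: measurable_sets)

lemma space_past [simp]: "space (past n) = space M"
  unfolding past_def by (simp add: space_measure_of_conv)

lemma sets_past: "sets (past n) = sigma_sets (space M) (\<Union>j\<in>past_indices n. noise_events j)"
  unfolding past_def by (rule sets_measure_of) (auto simp: noise_events_def)

lemma subalgebra_past: "subalgebra M (past n)"
proof -
  have "(\<Union>j\<in>past_indices n. noise_events j) \<subseteq> sets M"
    using noise_events_subset_sets past_indices_subset by blast
  then show ?thesis
    unfolding subalgebra_def sets_past by (simp add: sets.sigma_sets_subset)
qed

lemma vimage_noise_in_noise_events: "A \<in> sets borel \<Longrightarrow> noise j -` A \<inter> space M \<in> noise_events j"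
  unfolding noise_events_def by blast

lemma noise_measurable_past:
  assumes "j \<in> past_indices n"
  shows "noise j \<in> borel_measurable (past n)"
proof (rule measurableI)
  fix A :: "real set" assume "A \<in> sets borel"
  then have "noise j -` A \<inter> space M \<in> noise_events j" by (rule vimage_noise_in_noise_events)
  then show "noise j -` A \<inter> space (past n) \<in> sets (past n)"
    using assms unfolding sets_past by auto
qed simp

lemma X1_measurable_past: "X 1 \<in> measurable (past n) (count_space UNIV)"
proof -
  have [measurable]: "noise First \<in> borel_measurable (past n)"
    by (rule noise_measurable_past) (simp add: past_indices_def)
  have "(\<lambda>\<omega>. \<lfloor>noise First \<omega>\<rfloor>) \<in> measurable (past n) (count_space UNIV)"
    by measurable
  then show ?thesis by (simp add: noise_def erw_noise_def)
qed

lemma U_measurable_past: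
  assumes "1 \<le> m" "m < n" "i \<in> {1..k}"
  shows "U m i \<in> measurable (past n) (count_space {1..m})"
proof -
  have [measurable]: "noise (Samp m i) \<in> borel_measurable (past n)"
    by (rule noise_measurable_past) (use assms in \<open>auto simp: past_indices_def\<close>)
  have "(\<lambda>\<omega>. nat \<lfloor>noise (Samp m i) \<omega>\<rfloor>) \<in> measurable (past n) (count_space UNIV)"
    by measurable
  then have "U m i \<in> measurable (past n) (count_space UNIV)"
    by (simp add: noise_def erw_noise_def)
  then show ?thesis
    by (rule measurable_count_space_extend[OF subset_UNIV, rotated]) (use U_vals assms in auto)
qed

lemma V_measurable_past:
  assumes "1 \<le> m" "m < n"
  shows "V m \<in> borel_measurable (past n)"
  using noise_measurable_past[of "Coin m" n] assms by (simp add: past_indices_def noise_def erw_noise_def)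

lemma erw_count_le: "erw_count k X U m \<omega> \<le> k"
proof -
  have "erw_count k X U m \<omega> \<le> card {1..k}" unfolding erw_count_def by (rule card_mono) auto
  then show ?thesis by simp
qed

lemma X_Suc:
  assumes "1 \<le> m" "\<omega> \<in> space M"
  shows "X (Suc m) \<omega> = (if V m \<omega> \<le> step_prob_count (erw_count k X U m \<omega>) then 1 else -1)"
  using X_step assms erw_count_le[of m \<omega>] by (simp add: step_prob_count_def Let_def min_absorb1)

lemma X_values:
  assumes "1 \<le> j" "\<omega> \<in> space M"
  shows "X j \<omega> \<in> {-1, 1}"
proof (cases "j = 1")
  case False
  with assms obtain m where "j = Suc m" "1 \<le> m" by (cases j) auto
  with assms show ?thesis by (simp add: X_Suc)
qed (use X1_vals assms in auto)

lemma X_measurable_past: "1 \<le> j \<Longrightarrow> j \<le> n \<Longrightarrow> X j \<in> measurable (past n) (count_space UNIV)"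
proof (induction j rule: less_induct)
  case (less j)
  show ?case
  proof (cases "j = 1")
    case True
    then show ?thesis using X1_measurable_past by simp
  next
    case False
    then obtain m where m: "j = Suc m" "1 \<le> m" using less.prems by (cases j) auto
    have IH: "l \<in> {1..m} \<Longrightarrow> X l \<in> measurable (past n) (count_space UNIV)" for l
      using less m by auto
    have sample_up: "Measurable.pred (past n) (\<lambda>\<omega>. X (U m i \<omega>) \<omega> = 1)" if i: "i \<in> {1..k}" for i
    proof (rule measurable_compose_countable'[where I = "{1..m}" and f = "\<lambda>l \<omega>. X l \<omega> = 1"])
      show "(\<lambda>\<omega>. X l \<omega> = 1) \<in> measurable (past n) (count_space UNIV)" if "l \<in> {1..m}" for l
        using measurable_compose[OF IH[OF that], of "\<lambda>x. x = 1"] by simp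
      show "U m i \<in> measurable (past n) (count_space {1..m})"
        by (rule U_measurable_past) (use m less.prems i in auto)
    qed simp
    have count: "(\<lambda>\<omega>. erw_count k X U m \<omega>) \<in> measurable (past n) (count_space UNIV)"
      unfolding erw_count_def by (rule measurable_card_filter) (rule sample_up)
    have step_prob_count_meas: "(\<lambda>\<omega>. step_prob_count (erw_count k X U m \<omega>)) \<in> borel_measurable (past n)"
      using measurable_compose[OF count, of step_prob_count] by simp
    have V_meas: "V m \<in> borel_measurable (past n)"
      by (rule V_measurable_past) (use m less.prems in auto)
    have "(\<lambda>\<omega>. if V m \<omega> \<le> step_prob_count (erw_count k X U m \<omega>) then (1::int) else -1)
        \<in> measurable (past n) (count_space UNIV)"
      using step_prob_count_meas V_meas by measurable
    then show ?thesis
      by (rule measurable_cong[THEN iffD1, rotated]) (use m X_Suc in auto)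
  qed
qed

lemma X_measurable: "1 \<le> j \<Longrightarrow> X j \<in> measurable M (count_space UNIV)"
  using measurable_from_subalg[OF subalgebra_past X_measurable_past[of j j]] by simp

lemma path_event_in_past:
  assumes "1 \<le> n"
  shows "path_event n v \<in> sets (past n)"
proof -
  have "Measurable.pred (past n) (\<lambda>\<omega>. \<forall>j\<in>{1..n}. X j \<omega> = v j)"
  proof (rule pred_intros_finite(3))
    fix j assume "j \<in> {1..n}"
    then have "X j \<in> measurable (past n) (count_space UNIV)"
      by (intro X_measurable_past) auto
    then show "Measurable.pred (past n) (\<lambda>\<omega>. X j \<omega> = v j)"
      using measurable_compose[of "X j" "past n" "count_space UNIV" "\<lambda>x. x = v j"] by simp
  qed simp
  then show ?thesis by (simp add: pred_def path_event_def)
qed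

lemma path_event_in_sets: "1 \<le> n \<Longrightarrow> path_event n v \<in> sets M"
  using path_event_in_past subalgebra_past by (auto simp: subalgebra_def)

lemma Int_stable_noise_events: "Int_stable (noise_events j)"
  unfolding Int_stable_def noise_events_def
proof safe
  fix A B :: "real set" assume "A \<in> sets borel" "B \<in> sets borel"
  then show "\<exists>C. noise j -` A \<inter> space M \<inter> (noise j -` B \<inter> space M) = noise j -` C \<inter> space M \<and> C \<in> sets borel"
    by (intro exI[of _ "A \<inter> B"]) auto
qed

text \<open>The past, the samples and the coin of time \<open>n\<close> are generated by disjoint groups of the
  independent noise.\<close>
lemma prob_past_inter_draw_event:
  assumes n: "1 \<le> n" and B: "B \<in> sets (past n)"
  shows "prob (B \<inter> draw_event n u t)
       = prob B * (\<Prod>i\<in>{1..k}. prob {\<omega>\<in>space M. U n i \<omega> = u i}) * prob {\<omega>\<in>space M. V n \<omega> \<le> t}"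
proof -
  define grp where "grp j = (case j of First \<Rightarrow> past_indices n | Samp m i \<Rightarrow> {Samp m i} | Coin m \<Rightarrow> {Coin m})" for j
  define J where "J = insert First (insert (Coin n) (Samp n ` {1..k}))"
  have "(\<Union>j\<in>J. grp j) \<subseteq> erw_index_set k"
    using n past_indices_subset by (auto simp: J_def grp_def erw_index_set_def)
  moreover have "disjoint_family_on grp J"
    by (auto simp: disjoint_family_on_def J_def grp_def past_indices_def)
  ultimately have indep_groups: "indep_sets (\<lambda>j. sigma_sets (space M) (\<Union>i\<in>grp j. noise_events i)) J"
    by (intro indep_sets_collect_sigma indep_sets_mono_index[OF _ indep_noise_events] Int_stable_noise_events)
  define A where "A j = (case j of First \<Rightarrow> B | Samp _ i \<Rightarrow> {\<omega>\<in>space M. U n i \<omega> = u i}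
                     | Coin _ \<Rightarrow> {\<omega>\<in>space M. V n \<omega> \<le> t})" for j
  have "A j \<in> sigma_sets (space M) (\<Union>i\<in>grp j. noise_events i)" if j: "j \<in> J" for j
  proof -
    consider "j = First" | i where "i \<in> {1..k}" "j = Samp n i" | "j = Coin n"
      using j unfolding J_def by blast
    then show ?thesis
    proof cases
      case 1
      then show ?thesis using B by (simp add: A_def grp_def sets_past)
    next
      case (2 i)
      then have "A j = noise (Samp n i) -` {real (u i)} \<inter> space M"
        by (auto simp: A_def noise_def erw_noise_def)
      then show ?thesis using 2 vimage_noise_in_noise_events[of "{real (u i)}"] by (simp add: grp_def)
    next
      case 3
      then have "A j = noise (Coin n) -` {..t} \<inter> space M"
        by (auto simp: A_def noise_def erw_noise_def)
      then show ?thesis using 3 vimage_noise_in_noise_events[of "{..t}"] by (simp add: grp_def)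
    qed
  qed
  then have "prob (\<Inter>j\<in>J. A j) = (\<Prod>j\<in>J. prob (A j))"
    by (intro indep_setsD[OF indep_groups]) (auto simp: J_def)
  moreover have "(\<Inter>j\<in>J. A j) = B \<inter> draw_event n u t"
    using sets.sets_into_space[OF B] by (auto simp: J_def A_def draw_event_def)
  moreover have "(\<Prod>j\<in>J. prob (A j)) = prob B * ((\<Prod>i\<in>{1..k}. prob {\<omega>\<in>space M. U n i \<omega> = u i}) * prob {\<omega>\<in>space M. V n \<omega> \<le> t})"
    by (simp add: J_def A_def prod.reindex inj_on_def image_iff)
  ultimately show ?thesis by (simp add: mult.assoc)
qed

lemma prob_V_le:
  assumes n: "1 \<le> n" and t: "t \<in> {0..1}"
  shows "prob {\<omega>\<in>space M. V n \<omega> \<le> t} = t"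
proof -
  have V_meas: "V n \<in> measurable M lborel"
    using noise_measurable[of "Coin n"] n
    by (simp add: erw_index_set_def noise_def erw_noise_def measurable_lborel2)
  have "prob {\<omega>\<in>space M. V n \<omega> \<le> t} = measure (distr M lborel (V n)) {..t}"
    by (subst measure_distr[OF V_meas]) (auto intro!: arg_cong[where f = prob])
  also have "\<dots> = measure lborel ({0..1} \<inter> {..t}) / measure lborel {0..(1::real)}"
    using V_unif n by (simp add: measure_uniform_measure)
  also have "{0..1} \<inter> {..t} = {0..t}" using t by auto
  finally show ?thesis using t by simp
qed

lemma step_prob_count_in_open_unit: "step_prob_count j \<in> {0<..<1}"
proof -
  define t where "t = f (real (min j k) / real k)"
  have "real (min j k) / real k \<in> {0..1}" using k by auto
  then have t: "0 \<le> t" "t \<le> 1" using f_range unfolding t_def by auto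
  have pos: "0 < a * t + b * (1 - t)" if "0 < a" "0 < b" for a b
  proof (cases "t = 0")
    case False
    then have "0 < a * t" "0 \<le> b * (1 - t)" using that t by simp_all
    then show ?thesis by linarith
  qed (use that in simp)
  have "0 < p * t + (1 - p) * (1 - t)" "0 < (1 - p) * t + p * (1 - t)"
    using p by (auto intro!: pos)
  moreover have "step_prob_count j = p * t + (1 - p) * (1 - t)"
    by (simp add: step_prob_count_def t_def)
  ultimately show ?thesis by (simp add: algebra_simps)
qed

lemma prob_path_event_inter_draw_event:
  assumes n: "1 \<le> n" and u: "u \<in> PiE {1..k} (\<lambda>_. {1..n})" and t: "t \<in> {0..1}"
  shows "prob (path_event n v \<inter> draw_event n u t) = prob (path_event n v) * (1 / real n) ^ k * t"
proof -
  have "(\<Prod>i\<in>{1..k}. prob {\<omega>\<in>space M. U n i \<omega> = u i}) = (\<Prod>i\<in>{1..k}. 1 / real n)"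
  proof (rule prod.cong[OF refl])
    fix i assume i: "i \<in> {1..k}"
    then have "u i \<in> {1..n}" using u by auto
    then show "prob {\<omega>\<in>space M. U n i \<omega> = u i} = 1 / real n" using U_unif n i by blast
  qed
  then show ?thesis
    using prob_past_inter_draw_event[OF n path_event_in_past[OF n]] prob_V_le[OF n t] by simp
qed

lemma draw_event_in_sets:
  assumes "1 \<le> n"
  shows "draw_event n u t \<in> sets M"
proof -
  have U_meas: "U n i \<in> measurable M (count_space UNIV)" if "i \<in> {1..k}" for i
  proof -
    have [measurable]: "noise (Samp n i) \<in> borel_measurable M"
      using that assms by (intro noise_measurable) (auto simp: erw_index_set_def)
    have "(\<lambda>\<omega>. nat \<lfloor>noise (Samp n i) \<omega>\<rfloor>) \<in> measurable M (count_space UNIV)"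
      by measurable
    then show ?thesis by (simp add: noise_def erw_noise_def)
  qed
  have [measurable]: "Measurable.pred M (\<lambda>\<omega>. \<forall>i\<in>{1..k}. U n i \<omega> = u i)"
  proof (rule pred_intros_finite(3))
    fix i assume "i \<in> {1..k}"
    then show "Measurable.pred M (\<lambda>\<omega>. U n i \<omega> = u i)"
      using measurable_compose[OF U_meas, of i "\<lambda>x. x = u i"] by simp
  qed simp
  have [measurable]: "V n \<in> borel_measurable M"
    using noise_measurable[of "Coin n"] assms by (simp add: erw_index_set_def noise_def erw_noise_def)
  show ?thesis
    unfolding draw_event_def by measurable
qed

lemma erw_count_eq_on_path_event:
  assumes n: "1 \<le> n" and \<omega>: "\<omega> \<in> path_event n v" and u: "\<forall>i\<in>{1..k}. U n i \<omega> = u i"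
  shows "erw_count k X U n \<omega> = card {i\<in>{1..k}. u i \<in> {j\<in>{1..n}. v j = 1}}"
proof -
  have "U n i \<omega> \<in> {1..n}" if "i \<in> {1..k}" for i
    using U_vals n \<omega> that by (auto simp: path_event_def)
  then have "{i\<in>{1..k}. X (U n i \<omega>) \<omega> = 1} = {i\<in>{1..k}. u i \<in> {j\<in>{1..n}. v j = 1}}"
    using \<omega> u by (auto simp: path_event_def)
  then show ?thesis by (simp add: erw_count_def)
qed

lemma path_event_inter_up_step:
  assumes n: "1 \<le> n"
  shows "path_event n v \<inter> {\<omega>\<in>space M. X (Suc n) \<omega> = 1} =
    (\<Union>u\<in>PiE {1..k} (\<lambda>_. {1..n}).
       path_event n v \<inter> draw_event n u (step_prob_count (card {i\<in>{1..k}. u i \<in> {j\<in>{1..n}. v j = 1}})))"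
    (is "?L = (\<Union>u\<in>?PU. ?E u)")
proof (intro equalityI subsetI)
  fix \<omega> assume \<omega>: "\<omega> \<in> ?L"
  then have sp: "\<omega> \<in> space M" by simp
  define u where "u = restrict (\<lambda>i. U n i \<omega>) {1..k}"
  have "u \<in> ?PU" using U_vals n sp by (auto simp: u_def)
  moreover have "\<forall>i\<in>{1..k}. U n i \<omega> = u i" by (simp add: u_def)
  ultimately show "\<omega> \<in> (\<Union>u\<in>?PU. ?E u)"
    using \<omega> X_Suc[OF n sp] erw_count_eq_on_path_event[OF n, of \<omega> v u]
    by (auto simp: draw_event_def split: if_splits)
next
  fix \<omega> assume "\<omega> \<in> (\<Union>u\<in>?PU. ?E u)"
  then obtain u where "\<omega> \<in> ?E u" by blast
  then show "\<omega> \<in> ?L"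
    using X_Suc[OF n] erw_count_eq_on_path_event[OF n, of \<omega> v u]
    by (auto simp: draw_event_def path_event_def)
qed

text \<open>This is where the Bernstein polynomial \<open>step_prob\<close> arises: the \<open>k\<close> samples are uniform
  on \<open>{1..n}\<close>, and a proportion \<open>up_count v n / n\<close> of them hits a \<open>+1\<close> step.\<close>
lemma prob_path_event_inter_up_step:
  assumes n: "1 \<le> n"
  shows "prob (path_event n v \<inter> {\<omega>\<in>space M. X (Suc n) \<omega> = 1})
       = prob (path_event n v) * step_prob (up_count v n / real n)"
proof -
  let ?PU = "PiE {1..k} (\<lambda>_. {1..n})" and ?A = "{j\<in>{1..n}. v j = 1}"
  let ?c = "\<lambda>u. step_prob_count (card {i\<in>{1..k}. u i \<in> ?A})"
  have disj: "disjoint_family_on (\<lambda>u. path_event n v \<inter> draw_event n u (?c u)) ?PU"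
    unfolding disjoint_family_on_def
  proof (intro ballI impI)
    fix u u' assume "u \<in> ?PU" "u' \<in> ?PU" "u \<noteq> u'"
    then obtain i where "i \<in> {1..k}" "u i \<noteq> u' i" using PiE_ext by blast
    then show "path_event n v \<inter> draw_event n u (?c u) \<inter> (path_event n v \<inter> draw_event n u' (?c u')) = {}"
      by (auto simp: draw_event_def)
  qed
  have "prob (path_event n v \<inter> {\<omega>\<in>space M. X (Suc n) \<omega> = 1})
      = (\<Sum>u\<in>?PU. prob (path_event n v \<inter> draw_event n u (?c u)))"
    unfolding path_event_inter_up_step[OF n]
    by (rule measure_finite_Union)
       (use disj path_event_in_sets[OF n] draw_event_in_sets[OF n] in \<open>auto simp: finite_PiE\<close>)
  also have "\<dots> = (\<Sum>u\<in>?PU. prob (path_event n v) * (1 / real n) ^ k * ?c u)"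
    using step_prob_count_in_open_unit
    by (intro sum.cong refl prob_path_event_inter_draw_event[OF n]) (auto simp: less_imp_le)
  also have "\<dots> = prob (path_event n v) * (1 / real n) ^ k * (\<Sum>u\<in>?PU. ?c u)"
    by (simp add: sum_distrib_left)
  also have "(\<Sum>u\<in>?PU. ?c u) = real n ^ k * step_prob (real (card ?A) / real n)"
    unfolding step_prob_def by (subst sum_PiE_eq_bernstein_poly) (use n in auto)
  finally show ?thesis
    using n by (simp add: up_count_def power_one_over)
qed

lemma step_prob_in_unit_interval: "a \<in> {0..1} \<Longrightarrow> step_prob a \<in> {0..1}"
  unfolding step_prob_def
  by (rule bernstein_poly_in_unit_interval) (use step_prob_count_in_open_unit in \<open>auto intro: less_imp_le\<close>)

lemma abs_innovation_le: "\<bar>innovation x m\<bar> \<le> 1"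
  using step_prob_in_unit_interval[OF up_count_over_in_unit_interval[of x m]]
  by (auto simp: innovation_def)

lemma innovation_cong: "(\<forall>j\<in>{1..Suc m}. x j = x' j) \<Longrightarrow> innovation x m = innovation x' m"
proof -
  assume eq: "\<forall>j\<in>{1..Suc m}. x j = x' j"
  then have "{j\<in>{1..m}. x j = 1} = {j\<in>{1..m}. x' j = 1}" by auto
  with eq show ?thesis by (simp add: innovation_def up_count_def)
qed

lemma innovation_measurable: "(\<lambda>\<omega>. innovation (path \<omega>) m) \<in> borel_measurable M"
proof -
  have up: "Measurable.pred M (\<lambda>\<omega>. X j \<omega> = 1)" if "1 \<le> j" for j
    using measurable_compose[OF X_measurable[OF that], of "\<lambda>x. x = 1"] by simp
  have "(\<lambda>\<omega>. card {j\<in>{1..m}. X j \<omega> = 1}) \<in> measurable M (count_space UNIV)"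
    by (rule measurable_card_filter) (use up in auto)
  from measurable_compose[OF this, of "\<lambda>c. step_prob (real c / real m)"]
  have [measurable]: "(\<lambda>\<omega>. step_prob (up_count (\<lambda>j. X j \<omega>) m / real m)) \<in> borel_measurable M"
    by (simp add: up_count_def)
  have [measurable]: "X (Suc m) \<in> measurable M (count_space UNIV)"
    by (rule X_measurable) simp
  show ?thesis
    unfolding innovation_def path_def by measurable
qed

lemma innovation_mult_eq_sum_indicator:
  assumes n: "1 \<le> n" and \<omega>: "\<omega> \<in> space M"
    and g: "\<And>x x'. (\<forall>j\<in>{1..n}. x j = x' j) \<Longrightarrow> g x = g x'"
  shows "innovation (path \<omega>) n * g (path \<omega>) =
    (\<Sum>v\<in>PiE {1..n} (\<lambda>_. {-1, 1}). g v * indicator (path_event n v \<inter> {\<omega>\<in>space M. X (Suc n) \<omega> = 1}) \<omega>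
        - g v * step_prob (up_count v n / real n) * indicator (path_event n v) \<omega>)"
proof -
  define v0 where "v0 = restrict (path \<omega>) {1..n}"
  have v0: "v0 \<in> PiE {1..n} (\<lambda>_. {-1, 1})"
    using X_values \<omega> by (auto simp: v0_def path_def)
  have in_path_event: "\<omega> \<in> path_event n v \<longleftrightarrow> v = v0" if "v \<in> PiE {1..n} (\<lambda>_. {-1, 1})" for v
  proof
    assume "\<omega> \<in> path_event n v"
    then show "v = v0"
      using that v0 by (intro PiE_ext[of v "{1..n}"]) (auto simp: path_event_def v0_def path_def)
  qed (use \<omega> in \<open>auto simp: path_event_def v0_def path_def\<close>)
  have "{j\<in>{1..n}. v0 j = 1} = {j\<in>{1..n}. path \<omega> j = 1}" by (auto simp: v0_def)
  then have v0_eqs: "g v0 = g (path \<omega>)" "up_count v0 n = up_count (path \<omega>) n"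
    by (auto intro!: g simp: v0_def up_count_def)
  have "(\<Sum>v\<in>PiE {1..n} (\<lambda>_. {-1, 1}). g v * indicator (path_event n v \<inter> {\<omega>\<in>space M. X (Suc n) \<omega> = 1}) \<omega>
        - g v * step_prob (up_count v n / real n) * indicator (path_event n v) \<omega>)
      = (\<Sum>v\<in>PiE {1..n} (\<lambda>_. {-1, 1}). if v = v0
          then g v0 * of_bool (X (Suc n) \<omega> = 1) - g v0 * step_prob (up_count v0 n / real n) else 0)"
    by (intro sum.cong refl) (use in_path_event \<omega> in \<open>auto simp: indicator_def\<close>)
  also have "\<dots> = g v0 * of_bool (X (Suc n) \<omega> = 1) - g v0 * step_prob (up_count v0 n / real n)"
    using v0 by (simp add: finite_PiE)
  finally show ?thesis
    using v0_eqs by (simp add: innovation_def path_def algebra_simps)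
qed

lemma integral_innovation_mult_past:
  assumes n: "1 \<le> n" and g: "\<And>x x'. (\<forall>j\<in>{1..n}. x j = x' j) \<Longrightarrow> g x = g x'"
  shows "(\<integral>\<omega>. innovation (path \<omega>) n * g (path \<omega>) \<partial>M) = 0"
proof -
  let ?up = "{\<omega>\<in>space M. X (Suc n) \<omega> = 1}"
  have up_sets: "?up \<in> sets M"
    using measurable_compose[OF X_measurable[of "Suc n"], of "\<lambda>x. x = 1"] by (simp add: pred_def)
  have "(\<integral>\<omega>. innovation (path \<omega>) n * g (path \<omega>) \<partial>M)
      = (\<integral>\<omega>. (\<Sum>v\<in>PiE {1..n} (\<lambda>_. {-1, 1}). g v * indicator (path_event n v \<inter> ?up) \<omega>
          - g v * step_prob (up_count v n / real n) * indicator (path_event n v) \<omega>) \<partial>M)"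
    by (rule Bochner_Integration.integral_cong[OF refl])
       (rule innovation_mult_eq_sum_indicator[where g = g, OF n _ g])
  also have "\<dots> = (\<Sum>v\<in>PiE {1..n} (\<lambda>_. {-1, 1}). g v * prob (path_event n v \<inter> ?up)
          - g v * step_prob (up_count v n / real n) * prob (path_event n v))"
    using path_event_in_sets[OF n] up_sets
    by (simp add: Bochner_Integration.integral_sum emeasure_eq_measure)
  also have "\<dots> = 0"
    by (simp add: prob_path_event_inter_up_step[OF n])
  finally show ?thesis .
qed

sublocale innovations: bounded_orthogonal_increments M "\<lambda>m \<omega>. innovation (path \<omega>) m"
proof
  show "(\<lambda>\<omega>. innovation (path \<omega>) m) \<in> borel_measurable M" for m
    by (rule innovation_measurable)
  show "\<bar>innovation (path \<omega>) m\<bar> \<le> 1" for m \<omega>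
    by (rule abs_innovation_le)
  show "(\<integral>\<omega>. innovation (path \<omega>) (Suc N) * (\<Sum>m=1..N. innovation (path \<omega>) m) ^ j \<partial>M) = 0" for N j
    by (rule integral_innovation_mult_past[where g = "\<lambda>x. (\<Sum>m=1..N. innovation x m) ^ j"])
       (auto intro!: arg_cong[where f = "\<lambda>s. s ^ j"] sum.cong innovation_cong)
qed

lemma up_count_Suc_eq_sum:
  "up_count x (Suc N) = of_bool (x 1 = 1) + (\<Sum>m=1..N. innovation x m) + (\<Sum>m=1..N. step_prob (up_count x m / real m))"
proof (induction N)
  case 0
  have "{j\<in>{1..Suc 0}. x j = 1} = (if x 1 = 1 then {1} else {})" by auto
  then show ?case by (simp add: up_count_def)
next
  case (Suc N)
  then show ?case by (simp add: up_count_Suc[of x "Suc N"] innovation_def)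
qed

lemma erw_S_eq_up_count:
  assumes "\<omega> \<in> space M"
  shows "real_of_int (erw_S X n \<omega>) = 2 * up_count (path \<omega>) n - real n"
proof (induction n)
  case (Suc n)
  have "X (Suc n) \<omega> \<in> {-1, 1}" using X_values assms by simp
  with Suc show ?case by (auto simp: erw_S_def up_count_Suc path_def)
qed (simp add: erw_S_def up_count_def)

lemma step_prob_count_Suc_le:
  assumes mono: "\<And>i. i \<in> {1..k} \<Longrightarrow> (2*p - 1) * f (real i / real k) \<le> (2*p - 1) * f ((real i - 1) / real k)"
  shows "step_prob_count (Suc j) \<le> step_prob_count j"
proof (cases "j < k")
  case True
  have "step_prob_count i = (1 - p) + (2*p - 1) * f (real (min i k) / real k)" for i
    by (simp add: step_prob_count_def algebra_simps)
  with mono[of "Suc j"] True show ?thesis by simp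
qed (simp add: step_prob_count_def)

lemma step_prob_antimono:
  assumes "\<And>i. i \<in> {1..k} \<Longrightarrow> (2*p - 1) * f (real i / real k) \<le> (2*p - 1) * f ((real i - 1) / real k)"
  shows "antimono_on {0..1} step_prob"
  unfolding step_prob_def by (intro bernstein_poly_antimono step_prob_count_Suc_le assms)

lemma step_prob_fixpoint:
  obtains c where "c \<in> {0<..<1}" "step_prob c = c"
proof -
  have "step_prob 0 > 0" "step_prob 1 < 1"
    using step_prob_count_in_open_unit by (simp_all add: step_prob_def)
  moreover have "\<exists>c. 0 \<le> c \<and> c \<le> 1 \<and> c - step_prob c = 0"
    using calculation unfolding step_prob_def
    by (intro IVT') (auto simp: continuous_intros continuous_on_bernstein_poly)
  ultimately show ?thesis
    using that by (metis greaterThanLessThan_iff eq_iff_diff_eq_0 less_eq_real_def)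
qed

text \<open>Dividing \<open>up_count_Suc_eq_sum\<close> by \<open>N + 1\<close> exhibits the frequency of \<open>+1\<close> steps as an
  averaged recursion driven by \<open>step_prob\<close>, perturbed by the normalised innovation sum.\<close>
lemma up_frequency_tendsto:
  assumes antimono: "antimono_on {0..1} step_prob"
    and c: "c \<in> {0..1}" "step_prob c = c"
    and innovations: "(\<lambda>N. (\<Sum>m=1..N. innovation x m) / real N) \<longlonglongrightarrow> 0"
  shows "(\<lambda>n. up_count x n / real n) \<longlonglongrightarrow> c"
proof (rule averaged_recursion_tendsto[OF _ antimono step_prob_in_unit_interval c])
  define r where "r N = (of_bool (x 1 = 1) + (\<Sum>m=1..N. innovation x m)) / (real N + 1)" for N
  have "(\<lambda>N. of_bool (x 1 = 1) / (real N + 1)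
            + (\<Sum>m=1..N. innovation x m) / real N * (real N / (real N + 1))) \<longlonglongrightarrow> 0 + 0 * 1"
    by (intro tendsto_add tendsto_mult innovations) real_asymp+
  moreover have "r = (\<lambda>N. of_bool (x 1 = 1) / (real N + 1)
            + (\<Sum>m=1..N. innovation x m) / real N * (real N / (real N + 1)))"
  proof
    fix N show "r N = of_bool (x 1 = 1) / (real N + 1)
            + (\<Sum>m=1..N. innovation x m) / real N * (real N / (real N + 1))"
      by (cases "N = 0") (simp_all add: r_def add_divide_distrib)
  qed
  ultimately show "r \<longlonglongrightarrow> 0" by (simp only: mult_zero_left add_0_left)
  show "up_count x (Suc N) / real (Suc N) = running_average (\<lambda>m. step_prob (up_count x m / real m)) N + r N" for N
    by (simp add: running_average_def up_count_Suc_eq_sum r_def add_divide_distrib algebra_simps)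
qed (rule up_count_over_in_unit_interval)

theorem erw_S_over_n_tendsto:
  assumes mono: "\<And>i. i \<in> {1..k} \<Longrightarrow> (2*p - 1) * f (real i / real k) \<le> (2*p - 1) * f ((real i - 1) / real k)"
  shows "\<exists>x\<in>{-1<..<1}. AE \<omega> in M. (\<lambda>n. real_of_int (erw_S X n \<omega>) / real n) \<longlonglongrightarrow> x"
proof -
  obtain c where c: "c \<in> {0<..<1}" "step_prob c = c" by (rule step_prob_fixpoint)
  have conv: "(\<lambda>n. real_of_int (erw_S X n \<omega>) / real n) \<longlonglongrightarrow> 2 * c - 1"
    if \<omega>: "\<omega> \<in> space M" and innovations: "(\<lambda>N. innovations.S N \<omega> / real N) \<longlonglongrightarrow> 0" for \<omega>
  proof -
    have "(\<lambda>n. up_count (path \<omega>) n / real n) \<longlonglongrightarrow> c"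
      using innovations c step_prob_antimono[OF mono]
      by (intro up_frequency_tendsto) (auto simp: innovations.S_def)
    then have "(\<lambda>n. 2 * (up_count (path \<omega>) n / real n) - 1) \<longlonglongrightarrow> 2 * c - 1"
      by (intro tendsto_intros)
    moreover have "eventually (\<lambda>n. 2 * (up_count (path \<omega>) n / real n) - 1
                     = real_of_int (erw_S X n \<omega>) / real n) sequentially"
      using eventually_gt_at_top[of 0]
      by eventually_elim (simp add: erw_S_eq_up_count[OF \<omega>] field_simps)
    ultimately show ?thesis by (rule Lim_transform_eventually)
  qed
  have "AE \<omega> in M. (\<lambda>n. real_of_int (erw_S X n \<omega>) / real n) \<longlonglongrightarrow> 2 * c - 1"
    using innovations.AE_S_over_N_tendsto_0 by (rule AE_mp) (auto intro: conv)
  moreover have "2 * c - 1 \<in> {-1<..<1}" using c by auto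
  ultimately show ?thesis by blast
qed

end

theorem proposition4p2:
  fixes M :: "'a measure"
    and q p :: real and k :: nat and f :: "real \<Rightarrow> real"
    and X :: "nat \<Rightarrow> 'a \<Rightarrow> int"
    and U :: "nat \<Rightarrow> nat \<Rightarrow> 'a \<Rightarrow> nat"
    and V :: "nat \<Rightarrow> 'a \<Rightarrow> real"
  assumes q: "0 \<le> q" "q \<le> 1"
    and p: "0 < p" "p < 1" "p \<noteq> 1/2"
    and k: "1 \<le> k"
    and f_range: "\<forall>x\<in>{0..1}. f x \<in> {0..1}"
    and M: "prob_space M"
    and indep: "prob_space.indep_vars M (\<lambda>_. borel) (erw_noise (X 1) U V) (erw_index_set k)"
    and X0: "\<forall>\<omega>\<in>space M. X 0 \<omega> = 0"
    and X1_vals: "\<forall>\<omega>\<in>space M. X 1 \<omega> \<in> {-1, 1}"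
    and X1_prob: "measure M {\<omega>\<in>space M. X 1 \<omega> = 1} = q"
    and U_vals: "\<forall>n\<ge>1. \<forall>i\<in>{1..k}. \<forall>\<omega>\<in>space M. U n i \<omega> \<in> {1..n}"
    and U_unif: "\<forall>n\<ge>1. \<forall>i\<in>{1..k}. \<forall>j\<in>{1..n}.
                   measure M {\<omega>\<in>space M. U n i \<omega> = j} = 1 / real n"
    and V_unif: "\<forall>n\<ge>1. distr M lborel (V n) = uniform_measure lborel {0..1}"
    and X_step: "\<forall>n\<ge>1. \<forall>\<omega>\<in>space M. X (Suc n) \<omega> =
        (let c = real (erw_count k X U n \<omega>) / real k in
         if V n \<omega> \<le> p * f c + (1 - p) * (1 - f c) then 1 else -1)"
    and cond: "(p > 1/2 \<and> f 1 < p / (2*p - 1)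
                 \<and> (\<forall>i\<in>{1..k}. f (real i / real k) \<le> f ((real i - 1) / real k))
                 \<and> (\<exists>i\<in>{1..k}. f (real i / real k) < f ((real i - 1) / real k)))
             \<or> (p < 1/2 \<and> f 0 < (1 - p) / (1 - 2*p)
                 \<and> (\<forall>i\<in>{1..k}. f (real i / real k) \<ge> f ((real i - 1) / real k))
                 \<and> (\<exists>i\<in>{1..k}. f (real i / real k) > f ((real i - 1) / real k)))"
  shows "\<exists>x\<in>{-1<..<1}. AE \<omega> in M.
           (\<lambda>n. real_of_int (erw_S X n \<omega>) / real n) \<longlonglongrightarrow> x"
proof -
  interpret elephant_walk M p k f X U V
    by (rule elephant_walk.intro[OF p(1,2) k f_range M indep X1_vals U_vals U_unif V_unif X_step])
  text \<open>Only the monotonicity in \<open>cond\<close> is needed: the bounds on \<open>f 0\<close> and \<open>f 1\<close> hold for any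
    \<open>f\<close> with values in \<open>[0, 1]\<close>, the strict inequalities are not used, and neither is the law
    of \<open>X 1\<close>.\<close>
  have "(2*p - 1) * f (real i / real k) \<le> (2*p - 1) * f ((real i - 1) / real k)"
    if i: "i \<in> {1..k}" for i
  proof (cases "p > 1/2")
    case True
    with cond i have "f (real i / real k) \<le> f ((real i - 1) / real k)" by auto
    with True show ?thesis by (intro mult_left_mono) auto
  next
    case False
    with cond i have "f (real i / real k) \<ge> f ((real i - 1) / real k)" by auto
    with False show ?thesis by (intro mult_left_mono_neg) auto
  qed
  then show ?thesis by (rule erw_S_over_n_tendsto)
qed

end
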